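(* Let $T:(0,\infty)\to(0,\infty)$ be an integrable, non-decreasing and unbounded function, and suppose $\varphi$ is differentiable. Then $T$ has $\varphi$-order $\rho_\varphi(T)=\rho\in[0,\infty)$ if and only if the integral $$\int^\infty\frac{\varphi'(t)T(t)}{\varphi(t)^{\mu+1}}\,dt$$ converges for every $\mu>\rho$ and diverges for every $\mu<\rho$. Moreover, if $\rho_\varphi(T)=\infty$, then this integral diverges for every $\mu\in\mathbb{R}$.
   Context: Let $R_0>0$. $\varphi:(R_0,\infty)\to(0,\infty)$ is a non-decreasing unbounded function with $\log r\le\varphi(r)\le r$ for $r\ge R_0$. For a non-decreasing positive function $T$, $\rho_\varphi(T)=\limsup_{r\to\infty}\frac{\log T(r)}{\log\varphi(r)}$. The lower limit of integration is any fixed sufficiently large number. *)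

theory Defs
  imports "HOL-Analysis.Analysis"
begin

definition phi_order :: "(real \<Rightarrow> real) \<Rightarrow> (real \<Rightarrow> real) \<Rightarrow> ereal" where
  "phi_order \<phi> T = Limsup at_top (\<lambda>r. ereal (ln (T r) / ln (\<phi> r)))"

definition improper_int_converges :: "(real \<Rightarrow> real) \<Rightarrow> bool" where
  "improper_int_converges f \<longleftrightarrow> (\<forall>\<^sub>F a in at_top. f integrable_on {a..})"

end

theory Submission
  imports Defs
begin

text \<open>If \<open>T \<le> \<phi>^\<kappa>\<close> eventually with \<open>\<kappa> < \<mu>\<close>, the integrand is at most
  \<open>\<phi>' \<phi>^(\<kappa> - \<mu> - 1)\<close>, whose integral from \<open>a\<close> is \<open>\<phi>(a)^(\<kappa> - \<mu>) / (\<mu> - \<kappa>)\<close> by the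
  substitution \<open>s = \<phi>(t)\<close>. Conversely, since \<open>T\<close> is non-decreasing, for \<open>\<mu> > 0\<close> the integral
  from \<open>r\<close> to \<open>\<infinity>\<close> is at least \<open>T(r) \<phi>(r)^(-\<mu>) / \<mu>\<close>, so convergence forces \<open>T = O(\<phi>^\<mu>)\<close>,
  which fails if \<open>\<phi>^\<kappa> \<le> T\<close> for arbitrarily large \<open>t\<close> and some \<open>\<kappa> > \<mu>\<close>; for \<open>\<mu> < 0\<close> the
  integral over \<open>[a, b]\<close> already grows like \<open>\<phi>(b)^(-\<mu>)\<close>. As \<open>ln T / ln \<phi> < c\<close> is equivalent
  to \<open>T < \<phi>^c\<close>, the \<open>\<phi>\<close>-order is exactly the threshold between convergence and divergence.\<close>

lemma mono_on_unbounded_imp_filterlim_at_top: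
  fixes g :: "real \<Rightarrow> real"
  assumes "mono_on {a<..} g" and "\<forall>M. \<exists>r>a. g r > M"
  shows "filterlim g at_top at_top"
  unfolding filterlim_at_top eventually_at_top_linorder
proof
  fix M
  obtain r where "r > a" "g r > M"
    using assms(2) by blast
  then have "\<forall>x\<ge>r. M \<le> g x"
    using mono_onD[OF assms(1)] by force
  then show "\<exists>r. \<forall>x\<ge>r. M \<le> g x" ..
qed

lemma mono_on_imp_borel_measurable_lebesgue_on:
  fixes f :: "real \<Rightarrow> real"
  assumes "mono_on S f"
  shows "f \<in> borel_measurable (lebesgue_on S)"
proof -
  have "sets (restrict_space borel S) \<subseteq> sets (lebesgue_on S)"
    by (rule mono_restrict_space) force
  moreover have "space (restrict_space borel S) = space (lebesgue_on S)"
    by (simp add: space_restrict_space)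
  ultimately show ?thesis
    using borel_measurable_subalgebra borel_measurable_mono_on_fnc[OF assms] by blast
qed

lemma integrable_on_bounded_measurable_product:
  fixes g k :: "real \<Rightarrow> real"
  assumes "g integrable_on S" "\<And>x. x \<in> S \<Longrightarrow> 0 \<le> g x" "S \<in> sets lebesgue"
    and "k \<in> borel_measurable (lebesgue_on S)" "bounded (k ` S)"
  shows "(\<lambda>x. k x * g x) integrable_on S"
  using absolutely_integrable_bounded_measurable_product_real
      [OF assms(4,3,5) nonnegative_absolutely_integrable_1[OF assms(1,2)]]
  by (rule set_lebesgue_integral_eq_integral(1))

lemma improper_int_convergesI:
  assumes "\<And>a. A \<le> a \<Longrightarrow> f integrable_on {a..}"
  shows "improper_int_converges f"
  unfolding improper_int_converges_def eventually_at_top_linorder using assms by blast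

lemma improper_int_convergesE:
  assumes "improper_int_converges f"
  obtains a where "B \<le> a" "f integrable_on {a..}"
proof -
  obtain N where "\<And>a. N \<le> a \<Longrightarrow> f integrable_on {a..}"
    using assms unfolding improper_int_converges_def eventually_at_top_linorder by blast
  then show ?thesis
    using that[of "max N B"] by simp
qed

lemma ln_div_ln_less_iff_less_powr:
  fixes x y c :: real
  assumes "0 < x" "1 < y"
  shows "ln x / ln y < c \<longleftrightarrow> x < y powr c"
proof -
  have "ln x / ln y < c \<longleftrightarrow> ln x < c * ln y"
    using assms by (simp add: pos_divide_less_eq)
  also have "\<dots> \<longleftrightarrow> ln x < ln (y powr c)"
    using assms by (simp add: ln_powr)
  also have "\<dots> \<longleftrightarrow> x < y powr c"
    using assms by (intro ln_less_cancel_iff) auto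
  finally show ?thesis .
qed

locale phi_order_setting =
  fixes \<phi> T :: "real \<Rightarrow> real" and R\<^sub>0 :: real
  assumes R0_pos: "R\<^sub>0 > 0"
    and phi_pos: "\<forall>r>R\<^sub>0. \<phi> r > 0"
    and phi_mono: "mono_on {R\<^sub>0<..} \<phi>"
    and phi_unbdd: "\<forall>M. \<exists>r>R\<^sub>0. \<phi> r > M"
    and phi_diff: "\<forall>r>R\<^sub>0. \<phi> differentiable (at r)"
    and T_pos: "\<forall>t>0. T t > 0"
    and T_mono: "mono_on {0<..} T"
begin

definition integrand :: "real \<Rightarrow> real \<Rightarrow> real" where
  "integrand \<mu> t = deriv \<phi> t * T t / \<phi> t powr (\<mu> + 1)"

lemma integrand_eq: "integrand \<mu> t = T t * (deriv \<phi> t * \<phi> t powr (-\<mu> - 1))"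
proof -
  have "-\<mu> - 1 = -(\<mu> + 1)"
    by simp
  then have "\<phi> t powr (-\<mu> - 1) = inverse (\<phi> t powr (\<mu> + 1))"
    by (simp only: powr_minus)
  then show ?thesis
    by (simp add: integrand_def divide_inverse)
qed

lemma phi_has_deriv: "r > R\<^sub>0 \<Longrightarrow> (\<phi> has_real_derivative deriv \<phi> r) (at r)"
  using phi_diff DERIV_deriv_iff_real_differentiable by blast

lemma deriv_phi_nonneg: "r > R\<^sub>0 \<Longrightarrow> deriv \<phi> r \<ge> 0"
  by (rule mono_on_imp_deriv_nonneg[OF phi_mono phi_has_deriv]) (auto simp: interior_open)

lemma integrand_nonneg:
  assumes "t > R\<^sub>0"
  shows "integrand \<mu> t \<ge> 0"
proof -
  have "0 \<le> deriv \<phi> t" "0 < T t" "0 < \<phi> t"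
    using assms deriv_phi_nonneg phi_pos T_pos R0_pos by auto
  then show ?thesis
    by (simp add: integrand_def)
qed

lemma phi_at_top: "filterlim \<phi> at_top at_top"
  by (rule mono_on_unbounded_imp_filterlim_at_top[OF phi_mono phi_unbdd])

lemma eventually_less_phi_powr:
  assumes "p > 0"
  shows "\<forall>\<^sub>F t in at_top. M < \<phi> t powr p"
proof -
  have "\<forall>\<^sub>F t in at_top. max 1 M powr (1/p) < \<phi> t"
    using phi_at_top by (simp add: filterlim_at_top_dense)
  then show ?thesis
  proof (rule eventually_mono)
    fix t assume t: "max 1 M powr (1/p) < \<phi> t"
    have "M \<le> (max 1 M powr (1/p)) powr p"
      using assms by (simp add: powr_powr)
    also have "\<dots> < \<phi> t powr p"
      by (rule powr_less_mono2) (use assms t in auto)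
    finally show "M < \<phi> t powr p" .
  qed
qed

lemma phi_powr_neg_tendsto_0: "p > 0 \<Longrightarrow> ((\<lambda>t. \<phi> t powr (-p)) \<longlongrightarrow> 0) at_top"
  by (rule tendsto_neg_powr) (use phi_at_top in auto)

lemma borel_measurable_phi_T_on_tail:
  assumes "a > R\<^sub>0"
  shows "\<phi> \<in> borel_measurable (lebesgue_on {a..})" "T \<in> borel_measurable (lebesgue_on {a..})"
proof -
  show "\<phi> \<in> borel_measurable (lebesgue_on {a..})"
    by (rule mono_on_imp_borel_measurable_lebesgue_on, rule mono_on_subset[OF phi_mono])
       (use assms in auto)
  show "T \<in> borel_measurable (lebesgue_on {a..})"
    by (rule mono_on_imp_borel_measurable_lebesgue_on, rule mono_on_subset[OF T_mono])
       (use assms R0_pos in auto)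
qed

lemma weight_has_integral_interval:
  assumes "R\<^sub>0 < a" "a \<le> b" "\<mu> \<noteq> 0"
  shows "((\<lambda>t. deriv \<phi> t * \<phi> t powr (-\<mu> - 1)) has_integral
          (\<phi> a powr (-\<mu>) - \<phi> b powr (-\<mu>)) / \<mu>) {a..b}"
proof -
  have "((\<lambda>t. - (\<phi> t powr (-\<mu>) / \<mu>)) has_real_derivative deriv \<phi> t * \<phi> t powr (-\<mu> - 1)) (at t)"
    if "t \<in> {a..b}" for t
  proof -
    have t: "t > R\<^sub>0" using that assms by auto
    have "((\<lambda>t. \<phi> t powr (-\<mu>)) has_real_derivative
            (-\<mu>) * \<phi> t powr (-\<mu> - of_nat 1) * deriv \<phi> t) (at t)"
      by (rule DERIV_fun_powr[OF phi_has_deriv[OF t]]) (use phi_pos t in auto)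
    from DERIV_cdivide[OF this, of "-\<mu>"] show ?thesis
      using assms(3) by (simp add: mult.commute)
  qed
  then have "((\<lambda>t. deriv \<phi> t * \<phi> t powr (-\<mu> - 1)) has_integral
      - (\<phi> b powr (-\<mu>) / \<mu>) - - (\<phi> a powr (-\<mu>) / \<mu>)) {a..b}"
    by (intro fundamental_theorem_of_calculus[OF assms(2)])
       (simp add: has_real_derivative_iff_has_vector_derivative has_vector_derivative_at_within)
  then show ?thesis
    by (simp add: diff_divide_distrib)
qed

lemma weight_has_integral:
  assumes "R\<^sub>0 < a" "\<delta> > 0"
  shows "((\<lambda>t. deriv \<phi> t * \<phi> t powr (-\<delta> - 1)) has_integral \<phi> a powr (-\<delta>) / \<delta>) {a..}"
proof (rule has_integral_to_inf)
  let ?w = "\<lambda>t. deriv \<phi> t * \<phi> t powr (-\<delta> - 1)"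
  show "?w integrable_on {a..y}" for y
    using weight_has_integral_interval[OF assms(1), of y \<delta>] assms by (cases "a \<le> y") auto
  show "0 \<le> ?w y" if "a \<le> y" for y
    using deriv_phi_nonneg that assms by auto
  have "\<forall>\<^sub>F y in at_top. (\<phi> a powr (-\<delta>) - \<phi> y powr (-\<delta>)) / \<delta> = integral {a..y} ?w"
    using eventually_ge_at_top[of a]
  proof eventually_elim
    case (elim y)
    show ?case
      by (intro integral_unique[symmetric] weight_has_integral_interval[OF assms(1) elim])
         (use assms in simp)
  qed
  moreover have "((\<lambda>y. (\<phi> a powr (-\<delta>) - \<phi> y powr (-\<delta>)) / \<delta>) \<longlongrightarrow> (\<phi> a powr (-\<delta>) - 0) / \<delta>) at_top"
    using assms by (intro tendsto_intros phi_powr_neg_tendsto_0) auto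
  ultimately show "((\<lambda>y. integral {a..y} ?w) \<longlongrightarrow> \<phi> a powr (-\<delta>) / \<delta>) at_top"
    by (simp add: tendsto_cong)
qed

text \<open>Measurability of \<open>deriv \<phi>\<close> is not available, so instead of a direct comparison the
  integrand is factored into a bounded measurable function of \<open>\<phi>\<close> and \<open>T\<close> times an
  integrable one.\<close>

lemma converges_if_eventually_le_phi_powr:
  assumes "\<forall>\<^sub>F t in at_top. T t \<le> \<phi> t powr \<kappa>" and "\<kappa> < \<mu>"
  shows "improper_int_converges (integrand \<mu>)"
proof -
  obtain A where A: "\<And>t. A \<le> t \<Longrightarrow> T t \<le> \<phi> t powr \<kappa>"
    using assms(1) unfolding eventually_at_top_linorder by blast
  show ?thesis
  proof (rule improper_int_convergesI[of "max A (R\<^sub>0 + 1)"])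
    fix a assume "max A (R\<^sub>0 + 1) \<le> a"
    then have a: "A \<le> a" "R\<^sub>0 < a" by auto
    let ?k = "\<lambda>t. T t * \<phi> t powr (-\<kappa>)"
    let ?w = "\<lambda>t. deriv \<phi> t * \<phi> t powr (-(\<mu> - \<kappa>) - 1)"
    have k_bounds: "0 \<le> ?k t \<and> ?k t \<le> 1" if "t \<in> {a..}" for t
    proof -
      have t: "A \<le> t" "R\<^sub>0 < t" using that a by auto
      then have "0 < \<phi> t" "0 < T t" using phi_pos T_pos R0_pos by auto
      have "?k t \<le> \<phi> t powr \<kappa> * \<phi> t powr (-\<kappa>)"
        using A[OF t(1)] by (intro mult_right_mono) auto
      also have "\<dots> = 1"
        using \<open>0 < \<phi> t\<close> by (simp add: powr_add[symmetric])
      finally show ?thesis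
        using \<open>0 < T t\<close> by simp
    qed
    have "(\<lambda>t. ?k t * ?w t) integrable_on {a..}"
    proof (rule integrable_on_bounded_measurable_product)
      show "?w integrable_on {a..}"
        by (rule has_integral_integrable[OF weight_has_integral[OF a(2)]]) (use assms(2) in simp)
      show "0 \<le> ?w t" if "t \<in> {a..}" for t
        using deriv_phi_nonneg that a by auto
      show "?k \<in> borel_measurable (lebesgue_on {a..})"
        by (intro borel_measurable_times powr_real_measurable borel_measurable_phi_T_on_tail[OF a(2)]
            borel_measurable_const)
      show "bounded (?k ` {a..})"
        unfolding bounded_iff using k_bounds by (intro exI[of _ 1]) auto
    qed simp
    moreover have "?k t * ?w t = integrand \<mu> t" if "t \<in> {a..}" for t
    proof -
      have "0 < \<phi> t" using that a phi_pos by auto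
      then have "\<phi> t powr (-\<kappa>) * \<phi> t powr (-(\<mu> - \<kappa>) - 1) = \<phi> t powr (-\<mu> - 1)"
        by (simp add: powr_add[symmetric])
      moreover have "?k t * ?w t = T t * (deriv \<phi> t * (\<phi> t powr (-\<kappa>) * \<phi> t powr (-(\<mu> - \<kappa>) - 1)))"
        by (simp add: mult_ac)
      ultimately show ?thesis
        by (simp add: integrand_eq)
    qed
    ultimately show "integrand \<mu> integrable_on {a..}"
      using integrable_cong[of "{a..}" "\<lambda>t. ?k t * ?w t" "integrand \<mu>"] by simp
  qed
qed

lemma converges_mono:
  assumes "\<mu> \<le> \<mu>'" "improper_int_converges (integrand \<mu>)"
  shows "improper_int_converges (integrand \<mu>')"
proof -
  obtain A where A: "\<And>t. A \<le> t \<Longrightarrow> 1 \<le> \<phi> t"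
    using phi_at_top unfolding filterlim_at_top eventually_at_top_linorder by blast
  obtain N where N: "\<And>a. N \<le> a \<Longrightarrow> integrand \<mu> integrable_on {a..}"
    using assms(2) unfolding improper_int_converges_def eventually_at_top_linorder by blast
  show ?thesis
  proof (rule improper_int_convergesI[of "max (max A N) (R\<^sub>0 + 1)"])
    fix a assume "max (max A N) (R\<^sub>0 + 1) \<le> a"
    then have a: "A \<le> a" "N \<le> a" "R\<^sub>0 < a" by auto
    let ?k = "\<lambda>t. \<phi> t powr (\<mu> - \<mu>')"
    have "(\<lambda>t. ?k t * integrand \<mu> t) integrable_on {a..}"
    proof (rule integrable_on_bounded_measurable_product)
      show "integrand \<mu> integrable_on {a..}"
        using N a(2) .
      show "0 \<le> integrand \<mu> t" if "t \<in> {a..}" for t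
        using integrand_nonneg that a by auto
      show "?k \<in> borel_measurable (lebesgue_on {a..})"
        by (intro powr_real_measurable borel_measurable_phi_T_on_tail[OF a(3)] borel_measurable_const)
      have "?k t \<le> 1" if "t \<in> {a..}" for t
        using A[of t] that a assms(1) powr_mono[of "\<mu> - \<mu>'" 0 "\<phi> t"] by simp
      then show "bounded (?k ` {a..})"
        unfolding bounded_iff by (intro exI[of _ 1]) auto
    qed simp
    moreover have "?k t * integrand \<mu> t = integrand \<mu>' t" if "t \<in> {a..}" for t
    proof -
      have "0 < \<phi> t" using that a phi_pos by auto
      then have "\<phi> t powr (\<mu> - \<mu>') * \<phi> t powr (-\<mu> - 1) = \<phi> t powr (-\<mu>' - 1)"
        by (simp add: powr_add[symmetric])
      then show ?thesis
        unfolding integrand_eq by (simp add: mult.left_commute)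
    qed
    ultimately show "integrand \<mu>' integrable_on {a..}"
      using integrable_cong[of "{a..}" "\<lambda>t. ?k t * integrand \<mu> t" "integrand \<mu>'"] by simp
  qed
qed

lemma integral_tail_lower_bound:
  assumes "R\<^sub>0 < a" "a \<le> r" "r \<le> b" "\<mu> \<noteq> 0" "integrand \<mu> integrable_on {a..}"
  shows "T r * ((\<phi> r powr (-\<mu>) - \<phi> b powr (-\<mu>)) / \<mu>) \<le> integral {a..} (integrand \<mu>)"
proof -
  have int_rb: "integrand \<mu> integrable_on {r..b}"
    by (rule integrable_on_subinterval[OF assms(5)]) (use assms in auto)
  have "T r * ((\<phi> r powr (-\<mu>) - \<phi> b powr (-\<mu>)) / \<mu>) \<le> integral {r..b} (integrand \<mu>)"
  proof (rule has_integral_le)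
    show "((\<lambda>t. T r * (deriv \<phi> t * \<phi> t powr (-\<mu> - 1))) has_integral
            T r * ((\<phi> r powr (-\<mu>) - \<phi> b powr (-\<mu>)) / \<mu>)) {r..b}"
      by (rule has_integral_mult_right, rule weight_has_integral_interval) (use assms in auto)
    show "(integrand \<mu> has_integral integral {r..b} (integrand \<mu>)) {r..b}"
      using int_rb by blast
    show "T r * (deriv \<phi> t * \<phi> t powr (-\<mu> - 1)) \<le> integrand \<mu> t" if "t \<in> {r..b}" for t
    proof -
      have "T r \<le> T t"
        using that assms R0_pos by (auto intro!: mono_onD[OF T_mono])
      moreover have "0 \<le> deriv \<phi> t * \<phi> t powr (-\<mu> - 1)"
        using deriv_phi_nonneg that assms by auto
      ultimately show ?thesis
        unfolding integrand_eq by (rule mult_right_mono)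
    qed
  qed
  also have "\<dots> \<le> integral {a..} (integrand \<mu>)"
    by (rule integral_subset_le[OF _ int_rb assms(5)]) (use assms integrand_nonneg in auto)
  finally show ?thesis .
qed

lemma diverges_if_negative:
  assumes "\<mu> < 0"
  shows "\<not> improper_int_converges (integrand \<mu>)"
proof
  assume "improper_int_converges (integrand \<mu>)"
  then obtain a where a: "R\<^sub>0 + 1 \<le> a" "integrand \<mu> integrable_on {a..}"
    by (rule improper_int_convergesE)
  define I where "I = integral {a..} (integrand \<mu>)"
  have "0 < T a" using T_pos a R0_pos by simp
  have "\<forall>\<^sub>F b in at_top. \<phi> a powr (-\<mu>) + (-\<mu>) * I / T a < \<phi> b powr (-\<mu>) \<and> a \<le> b"
    using eventually_less_phi_powr assms by (intro eventually_conj eventually_ge_at_top) auto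
  then obtain b where b: "\<phi> a powr (-\<mu>) + (-\<mu>) * I / T a < \<phi> b powr (-\<mu>)" "a \<le> b"
    unfolding eventually_at_top_linorder by auto
  have "(-\<mu>) * I < T a * (\<phi> b powr (-\<mu>) - \<phi> a powr (-\<mu>))"
    using b(1) \<open>0 < T a\<close> by (simp add: field_simps)
  then have "I < T a * ((\<phi> a powr (-\<mu>) - \<phi> b powr (-\<mu>)) / \<mu>)"
    using assms by (simp add: field_simps)
  moreover have "T a * ((\<phi> a powr (-\<mu>) - \<phi> b powr (-\<mu>)) / \<mu>) \<le> I"
    unfolding I_def using a b assms by (intro integral_tail_lower_bound) auto
  ultimately show False by simp
qed

lemma diverges_if_frequently_phi_powr_le:
  assumes "0 < \<mu>" "\<mu> < \<kappa>" and freq: "\<exists>\<^sub>F t in at_top. \<phi> t powr \<kappa> \<le> T t"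
  shows "\<not> improper_int_converges (integrand \<mu>)"
proof
  assume "improper_int_converges (integrand \<mu>)"
  then obtain a where a: "R\<^sub>0 + 1 \<le> a" "integrand \<mu> integrable_on {a..}"
    by (rule improper_int_convergesE)
  define I where "I = integral {a..} (integrand \<mu>)"
  have tail: "T r * \<phi> r powr (-\<mu>) \<le> \<mu> * I" if "a \<le> r" for r
  proof -
    have "((\<lambda>b. T r * ((\<phi> r powr (-\<mu>) - \<phi> b powr (-\<mu>)) / \<mu>)) \<longlongrightarrow>
            T r * ((\<phi> r powr (-\<mu>) - 0) / \<mu>)) at_top"
      using assms by (intro tendsto_intros phi_powr_neg_tendsto_0) auto
    moreover have "\<forall>\<^sub>F b in at_top. T r * ((\<phi> r powr (-\<mu>) - \<phi> b powr (-\<mu>)) / \<mu>) \<le> I"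
      using eventually_ge_at_top[of r]
    proof eventually_elim
      case (elim b)
      show ?case
        unfolding I_def by (rule integral_tail_lower_bound) (use a that elim assms in auto)
    qed
    ultimately have "T r * ((\<phi> r powr (-\<mu>) - 0) / \<mu>) \<le> I"
      by (rule tendsto_upperbound) simp
    then show ?thesis
      using assms by (simp add: field_simps)
  qed
  have "\<forall>\<^sub>F t in at_top. \<mu> * I < \<phi> t powr (\<kappa> - \<mu>) \<and> a \<le> t"
    using eventually_less_phi_powr assms by (intro eventually_conj eventually_ge_at_top) auto
  from frequently_ex[OF frequently_eventually_frequently[OF freq this]]
  obtain t where t: "\<phi> t powr \<kappa> \<le> T t" "\<mu> * I < \<phi> t powr (\<kappa> - \<mu>)" "a \<le> t"
    by blast
  have "\<phi> t powr (\<kappa> - \<mu>) = \<phi> t powr \<kappa> * \<phi> t powr (-\<mu>)"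
    by (simp add: powr_add[symmetric])
  also have "\<dots> \<le> T t * \<phi> t powr (-\<mu>)"
    using t(1) by (intro mult_right_mono) auto
  also have "\<dots> \<le> \<mu> * I"
    using tail t(3) by blast
  finally show False
    using t(2) by simp
qed

lemma eventually_phi_gt_1_and_T_pos: "\<forall>\<^sub>F t in at_top. 1 < \<phi> t \<and> 0 < T t"
proof (rule eventually_conj)
  show "\<forall>\<^sub>F t in at_top. 1 < \<phi> t"
    using phi_at_top by (simp add: filterlim_at_top_dense)
  show "\<forall>\<^sub>F t in at_top. 0 < T t"
    using eventually_gt_at_top[of 0] by (rule eventually_mono) (use T_pos in blast)
qed

lemma eventually_T_less_phi_powr_if_order_less:
  assumes "phi_order \<phi> T < ereal c"
  shows "\<forall>\<^sub>F t in at_top. T t < \<phi> t powr c"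
  using Limsup_lessD[OF assms[unfolded phi_order_def]] eventually_phi_gt_1_and_T_pos
  by eventually_elim (simp add: ln_div_ln_less_iff_less_powr)

lemma frequently_phi_powr_le_T_if_order_greater:
  assumes "ereal c < phi_order \<phi> T"
  shows "\<exists>\<^sub>F t in at_top. \<phi> t powr c \<le> T t"
proof (rule ccontr)
  assume "\<not> ?thesis"
  then have "\<forall>\<^sub>F t in at_top. T t < \<phi> t powr c"
    by (simp add: not_frequently not_le)
  then have "\<forall>\<^sub>F t in at_top. ereal (ln (T t) / ln (\<phi> t)) \<le> ereal c"
    using eventually_phi_gt_1_and_T_pos
    by eventually_elim (simp add: ln_div_ln_less_iff_less_powr less_imp_le)
  then have "phi_order \<phi> T \<le> ereal c"
    unfolding phi_order_def by (rule Limsup_bounded)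
  with assms show False by simp
qed

lemma converges_above_order:
  assumes "phi_order \<phi> T < ereal \<mu>"
  shows "improper_int_converges (integrand \<mu>)"
proof -
  obtain \<kappa> where \<kappa>: "phi_order \<phi> T < ereal \<kappa>" "\<kappa> < \<mu>"
    using ereal_dense2[OF assms] by auto
  have "\<forall>\<^sub>F t in at_top. T t \<le> \<phi> t powr \<kappa>"
    using eventually_T_less_phi_powr_if_order_less[OF \<kappa>(1)] by (rule eventually_mono) simp
  then show ?thesis
    using \<kappa>(2) by (rule converges_if_eventually_le_phi_powr)
qed

lemma diverges_below_order:
  assumes "ereal \<mu> < phi_order \<phi> T"
  shows "\<not> improper_int_converges (integrand \<mu>)"
proof (cases "\<mu> < 0")
  case True
  then show ?thesis by (rule diverges_if_negative)
next
  case False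
  obtain \<kappa> where \<kappa>: "\<mu> < \<kappa>" "ereal \<kappa> < phi_order \<phi> T"
    using ereal_dense2[OF assms] by auto
  \<comment> \<open>The detour through the positive exponent \<open>(\<mu> + \<kappa>) / 2\<close> also covers \<open>\<mu> = 0\<close>.\<close>
  have "\<not> improper_int_converges (integrand ((\<mu> + \<kappa>) / 2))"
    using False \<kappa>(1) frequently_phi_powr_le_T_if_order_greater[OF \<kappa>(2)]
    by (intro diverges_if_frequently_phi_powr_le) auto
  then show ?thesis
    using converges_mono[of \<mu> "(\<mu> + \<kappa>) / 2"] \<kappa>(1) by auto
qed

lemma order_eq_if_convergence_threshold:
  assumes "\<forall>\<mu>>\<rho>. improper_int_converges (integrand \<mu>)"
    and "\<forall>\<mu><\<rho>. \<not> improper_int_converges (integrand \<mu>)"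
  shows "phi_order \<phi> T = ereal \<rho>"
proof (rule antisym; rule ccontr)
  assume "\<not> phi_order \<phi> T \<le> ereal \<rho>"
  then obtain \<mu> where \<mu>: "ereal \<rho> < ereal \<mu>" "ereal \<mu> < phi_order \<phi> T"
    using ereal_dense2[of "ereal \<rho>"] by (auto simp: not_le)
  have "improper_int_converges (integrand \<mu>)"
    using assms(1) \<mu>(1) by simp
  with diverges_below_order[OF \<mu>(2)] show False by contradiction
next
  assume "\<not> ereal \<rho> \<le> phi_order \<phi> T"
  then obtain \<mu> where \<mu>: "phi_order \<phi> T < ereal \<mu>" "ereal \<mu> < ereal \<rho>"
    using ereal_dense2[of _ "ereal \<rho>"] by (auto simp: not_le)
  have "\<not> improper_int_converges (integrand \<mu>)"
    using assms(2) \<mu>(2) by simp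
  with converges_above_order[OF \<mu>(1)] show False by contradiction
qed

end

theorem lemma3p5:
  fixes \<phi> T :: "real \<Rightarrow> real" and R\<^sub>0 :: real
  assumes R0_pos: "R\<^sub>0 > 0"
    and phi_pos: "\<forall>r>R\<^sub>0. \<phi> r > 0"
    and phi_mono: "mono_on {R\<^sub>0<..} \<phi>"
    and phi_unbdd: "\<forall>M. \<exists>r>R\<^sub>0. \<phi> r > M"
    and phi_bounds: "\<forall>r>R\<^sub>0. ln r \<le> \<phi> r \<and> \<phi> r \<le> r"
    and phi_diff: "\<forall>r>R\<^sub>0. \<phi> differentiable (at r)"
    and T_pos: "\<forall>t>0. T t > 0"
    and T_int: "\<forall>a b. 0 < a \<longrightarrow> T integrable_on {a..b}"
    and T_mono: "mono_on {0<..} T"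
    and T_unbdd: "\<forall>M. \<exists>t>0. T t > M"
  shows "(\<forall>\<rho>::real. \<rho> \<ge> 0 \<longrightarrow>
            (phi_order \<phi> T = ereal \<rho> \<longleftrightarrow>
              ((\<forall>\<mu>>\<rho>. improper_int_converges
                          (\<lambda>t. deriv \<phi> t * T t / \<phi> t powr (\<mu> + 1))) \<and>
               (\<forall>\<mu><\<rho>. \<not> improper_int_converges
                          (\<lambda>t. deriv \<phi> t * T t / \<phi> t powr (\<mu> + 1))))))
       \<and> (phi_order \<phi> T = \<infinity> \<longrightarrow>
            (\<forall>\<mu>::real. \<not> improper_int_converges
                          (\<lambda>t. deriv \<phi> t * T t / \<phi> t powr (\<mu> + 1))))"
proof -
  interpret phi_order_setting \<phi> T R\<^sub>0
    using R0_pos phi_pos phi_mono phi_unbdd phi_diff T_pos T_mono by unfold_locales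
  have integrand: "(\<lambda>t. deriv \<phi> t * T t / \<phi> t powr (\<mu> + 1)) = integrand \<mu>" for \<mu>
    by (simp add: integrand_def fun_eq_iff)
  show ?thesis
    unfolding integrand
  proof (intro conjI allI impI)
    fix \<rho> :: real
    show "phi_order \<phi> T = ereal \<rho> \<longleftrightarrow>
          (\<forall>\<mu>>\<rho>. improper_int_converges (integrand \<mu>)) \<and>
          (\<forall>\<mu><\<rho>. \<not> improper_int_converges (integrand \<mu>))" (is "?order \<longleftrightarrow> ?threshold")
    proof
      assume ?order
      then show ?threshold
        using converges_above_order diverges_below_order by auto
    next
      assume ?threshold
      then show ?order
        by (intro order_eq_if_convergence_threshold) auto
    qed
  next
    fix \<mu> :: real
    assume "phi_order \<phi> T = \<infinity>"
    then show "\<not> improper_int_converges (integrand \<mu>)"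
      by (intro diverges_below_order) simp
  qed
qed

end
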